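(* Fix a block length $N>0$, transmission rates $R_1,R_2\ge 0$, transmit powers $P_1,P_2>0$ and noise powers $\sigma_1^2,\sigma_2^2>0$. For channel gains $g_1=|h_1|^2>0$ and $g_2=|h_2|^2>0$ define the SINRs/SNR $$\gamma_2^1=\frac{g_1P_2}{g_1P_1+\sigma_1^2},\qquad \gamma_1^1=\frac{g_1P_1}{\sigma_1^2},\qquad {\gamma_1^1}'=\frac{g_1P_1}{g_1P_2+\sigma_1^2},\qquad \gamma_2^2=\frac{g_2P_2}{g_2P_1+\sigma_2^2},$$ the (approximate) decoding error probabilities $$\epsilon_2^1=Q(f(\gamma_2^1,N,R_2)),\quad \epsilon_1^1=Q(f(\gamma_1^1,N,R_1)),\quad {\epsilon_1^1}'=Q(f({\gamma_1^1}',N,R_1)),\quad \epsilon_2=Q(f(\gamma_2^2,N,R_2)),$$ the effective decoding error probability at user 1 $$\epsilon_1=\begin{cases}\epsilon_1^1(1-\epsilon_2^1)+{\epsilon_1^1}'\epsilon_2^1, & R_1\le \log_2(1+{\gamma_1^1}'),\\ \epsilon_1^1(1-\epsilon_2^1)+\epsilon_2^1, & \log_2(1+{\gamma_1^1}')\le R_1\le \log_2(1+\gamma_1^1),\end{cases}$$ and the effective throughputs $T_1=R_1(1-\epsilon_1)$ and $T_2=R_2(1-\epsilon_2)$. Then, with all other variables fixed, $T_1$ is a monotonically increasing function of the channel gain $g_1=|h_1|^2$ (wherever $T_1$ is defined, i.e. $R_1\le\log_2(1+\gamma_1^1)$), and $T_2$ is a monotonically increasing function of the channel gain $g_2=|h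_2|^2$.
   Context: $Q(x)=\frac{1}{\sqrt{2\pi}}\int_x^\infty e^{-t^2/2}\,dt$ is the Gaussian tail function, and $f(x,y,z)=\ln 2\,\sqrt{\frac{y}{1-(1+x)^{-2}}}\,\bigl(\log_2(1+x)-z\bigr)$ for $x>0$. Setting: a two-user downlink NOMA short-packet system in which an access point sends superposed symbols with powers $P_1$ (to user 1, the stronger user, which performs successive interference cancellation) and $P_2$ (to user 2) at rates $R_1,R_2$ over blocks of length $N$; $h_i$ is the channel coefficient to user $i$ and $\sigma_i^2$ the noise power at user $i$. *)

theory Defs
  imports "HOL-Analysis.Analysis"
begin

definition Qfun :: "real \<Rightarrow> real" where
  "Qfun x = (1 / sqrt (2 * pi)) * integral {x..} (\<lambda>t. exp (- (t^2) / 2))"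

definition ffun :: "real \<Rightarrow> real \<Rightarrow> real \<Rightarrow> real" where
  "ffun x y z = ln 2 * sqrt (y / (1 - (1 + x) powr (-2))) * (log 2 (1 + x) - z)"

text \<open>SINRs/SNR; s1, s2 denote the noise powers sigma_1^2, sigma_2^2.\<close>
definition gamma21 :: "real \<Rightarrow> real \<Rightarrow> real \<Rightarrow> real \<Rightarrow> real" where
  "gamma21 g1 P1 P2 s1 = g1 * P2 / (g1 * P1 + s1)"
definition gamma11 :: "real \<Rightarrow> real \<Rightarrow> real \<Rightarrow> real" where
  "gamma11 g1 P1 s1 = g1 * P1 / s1"
definition gamma11' :: "real \<Rightarrow> real \<Rightarrow> real \<Rightarrow> real \<Rightarrow> real" where
  "gamma11' g1 P1 P2 s1 = g1 * P1 / (g1 * P2 + s1)"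
definition gamma22 :: "real \<Rightarrow> real \<Rightarrow> real \<Rightarrow> real \<Rightarrow> real" where
  "gamma22 g2 P1 P2 s2 = g2 * P2 / (g2 * P1 + s2)"

text \<open>Effective decoding error probability at user 1 (first case takes precedence
  on the boundary R1 = log2(1 + gamma11')).\<close>
definition eps1 :: "nat \<Rightarrow> real \<Rightarrow> real \<Rightarrow> real \<Rightarrow> real \<Rightarrow> real \<Rightarrow> real \<Rightarrow> real" where
  "eps1 N R1 R2 P1 P2 s1 g1 =
     (let e21 = Qfun (ffun (gamma21 g1 P1 P2 s1) (real N) R2);
          e11 = Qfun (ffun (gamma11 g1 P1 s1) (real N) R1);
          e11' = Qfun (ffun (gamma11' g1 P1 P2 s1) (real N) R1)
      in if R1 \<le> log 2 (1 + gamma11' g1 P1 P2 s1)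
         then e11 * (1 - e21) + e11' * e21
         else e11 * (1 - e21) + e21)"

definition eps2 :: "nat \<Rightarrow> real \<Rightarrow> real \<Rightarrow> real \<Rightarrow> real \<Rightarrow> real \<Rightarrow> real" where
  "eps2 N R2 P1 P2 s2 g2 = Qfun (ffun (gamma22 g2 P1 P2 s2) (real N) R2)"

definition T1 :: "nat \<Rightarrow> real \<Rightarrow> real \<Rightarrow> real \<Rightarrow> real \<Rightarrow> real \<Rightarrow> real \<Rightarrow> real" where
  "T1 N R1 R2 P1 P2 s1 g1 = R1 * (1 - eps1 N R1 R2 P1 P2 s1 g1)"

definition T2 :: "nat \<Rightarrow> real \<Rightarrow> real \<Rightarrow> real \<Rightarrow> real \<Rightarrow> real \<Rightarrow> real" where
  "T2 N R2 P1 P2 s2 g2 = R2 * (1 - eps2 N R2 P1 P2 s2 g2)"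

end

theory Submission
  imports Defs "HOL-Probability.Distributions"
begin

text \<open>Every SINR increases with its own channel gain, f(x, y, z) increases in x > 0 for
  y, z \<ge> 0, and Q decreases; hence every error probability decreases as the gain grows, which
  settles T2. For f put u = 1 + x, so that f = sqrt y (u ln u - z u ln 2) / sqrt (u^2 - 1):
  here u ln u / sqrt (u^2 - 1) increases (its derivative has the sign of u^2 - 1 - ln u) and
  u / sqrt (u^2 - 1) decreases. For T1 write eps1 = e11 (1 - e21) + c e21, where c = e11' in
  the first case and c = 1 in the second. Since gamma11' \<le> gamma11, e11 \<le> c; moreover
  e11, e21 and c all decrease with the gain (the case condition can only switch from the
  second case to the first), and lowering the weight e21 moves mass onto the smaller term.\<close>

lemma std_normal_density_has_integral: "(std_normal_density has_integral 1) UNIV"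
proof -
  have "has_bochner_integral lborel std_normal_density 1"
    using std_normal_moment_even[of 0] by simp
  then show ?thesis
    by (metis has_bochner_integral_iff has_integral_integral_lborel)
qed

lemma std_normal_density_integrable_on:
  assumes "S \<in> sets lborel"
  shows "std_normal_density integrable_on S"
proof -
  have "std_normal_density absolutely_integrable_on UNIV"
    using std_normal_density_has_integral by (intro nonnegative_absolutely_integrable_1) auto
  then have "std_normal_density absolutely_integrable_on S"
    by (rule set_integrable_subset) (use assms in auto)
  then show ?thesis
    using set_lebesgue_integral_eq_integral(1) by blast
qed

lemma Qfun_eq_integral_std_normal_density: "Qfun x = integral {x..} std_normal_density"
  unfolding Qfun_def std_normal_density_def by simp

lemma Qfun_nonneg: "0 \<le> Qfun x"
  unfolding Qfun_eq_integral_std_normal_density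
  by (rule integral_nonneg[OF std_normal_density_integrable_on]) auto

lemma Qfun_le_one: "Qfun x \<le> 1"
proof -
  have "integral {x..} std_normal_density \<le> integral UNIV std_normal_density"
    by (rule integral_subset_le)
       (auto intro: std_normal_density_integrable_on)
  then show ?thesis
    using std_normal_density_has_integral
    by (simp add: Qfun_eq_integral_std_normal_density integral_unique)
qed

lemma Qfun_antimono: "x \<le> y \<Longrightarrow> Qfun y \<le> Qfun x"
  unfolding Qfun_eq_integral_std_normal_density
  by (rule integral_subset_le) (auto intro: std_normal_density_integrable_on)

lemma mult_ln_div_sqrt_mono:
  fixes u v :: real
  assumes "1 < u" and "u \<le> v"
  shows "u * ln u / sqrt (u\<^sup>2 - 1) \<le> v * ln v / sqrt (v\<^sup>2 - 1)"
proof (rule DERIV_nonneg_imp_nondecreasing[OF \<open>u \<le> v\<close>])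
  fix x :: real
  assume "u \<le> x"
  with \<open>1 < u\<close> have "1 < x" by simp
  then have pos: "0 < x\<^sup>2 - 1"
    by (simp add: power_less_one_iff one_less_power)
  define r where "r = sqrt (x\<^sup>2 - 1)"
  have r: "0 < r" "r\<^sup>2 = x\<^sup>2 - 1"
    using pos by (simp_all add: r_def)
  have "((\<lambda>x. x * ln x / sqrt (x\<^sup>2 - 1)) has_real_derivative
          ((ln x + 1) * r - x * ln x * (x / r)) / r\<^sup>2) (at x)"
    using \<open>1 < x\<close> pos unfolding r_def
    by (auto intro!: derivative_eq_intros simp: field_simps power2_eq_square)
  moreover have
    "((ln x + 1) * r - x * ln x * (x / r)) / r\<^sup>2 = (x\<^sup>2 - 1 - ln x) / (r\<^sup>2 * r)"
    using r by (simp add: field_simps power2_eq_square) algebra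
  moreover have "0 \<le> (x\<^sup>2 - 1 - ln x) / (r\<^sup>2 * r)"
  proof -
    have "ln x \<le> x - 1"
      using \<open>1 < x\<close> by (simp add: ln_le_minus_one)
    also have "\<dots> \<le> x\<^sup>2 - 1"
      using \<open>1 < x\<close> by (simp add: power2_eq_square)
    finally show ?thesis
      using r pos by simp
  qed
  ultimately show
    "\<exists>y. ((\<lambda>x. x * ln x / sqrt (x\<^sup>2 - 1)) has_real_derivative y) (at x) \<and> 0 \<le> y"
    by auto
qed

lemma divide_sqrt_square_minus_one_antimono:
  fixes u v :: real
  assumes "1 < u" and "u \<le> v"
  shows "v / sqrt (v\<^sup>2 - 1) \<le> u / sqrt (u\<^sup>2 - 1)"
proof -
  have "1 < u\<^sup>2" "u\<^sup>2 \<le> v\<^sup>2"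
    using assms by (simp_all add: one_less_power power_mono)
  then have "v\<^sup>2 / (v\<^sup>2 - 1) \<le> u\<^sup>2 / (u\<^sup>2 - 1)"
    by (simp add: field_simps)
  then have "sqrt (v\<^sup>2 / (v\<^sup>2 - 1)) \<le> sqrt (u\<^sup>2 / (u\<^sup>2 - 1))"
    by simp
  then show ?thesis
    using assms by (simp add: real_sqrt_divide)
qed

lemma ffun_altdef:
  fixes x y z :: real
  assumes "0 < x" and "0 \<le> y"
  defines "u \<equiv> 1 + x"
  shows "ffun x y z =
    sqrt y * (u * ln u / sqrt (u\<^sup>2 - 1) - z * ln 2 * (u / sqrt (u\<^sup>2 - 1)))"
proof -
  have "1 < u"
    using assms by simp
  then have "0 < sqrt (u\<^sup>2 - 1)"
    by (simp add: one_less_power)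
  have "1 - u powr (-2) = (u\<^sup>2 - 1) / u\<^sup>2"
    using \<open>1 < u\<close> by (simp add: powr_minus powr_numeral field_simps)
  then have "sqrt (y / (1 - u powr (-2))) = sqrt y * u / sqrt (u\<^sup>2 - 1)"
    using \<open>1 < u\<close> by (simp add: real_sqrt_divide real_sqrt_mult)
  moreover have "ln 2 * (log 2 u - z) = ln u - z * ln 2"
    by (simp add: log_def field_simps)
  ultimately show ?thesis
    using \<open>0 < sqrt (u\<^sup>2 - 1)\<close> unfolding ffun_def u_def[symmetric]
    by (simp add: field_simps)
qed

lemma ffun_mono:
  fixes x x' y z :: real
  assumes "0 < x" and "x \<le> x'" and "0 \<le> y" and "0 \<le> z"
  shows "ffun x y z \<le> ffun x' y z"
proof -
  have "(1 + x) * ln (1 + x) / sqrt ((1 + x)\<^sup>2 - 1)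
      \<le> (1 + x') * ln (1 + x') / sqrt ((1 + x')\<^sup>2 - 1)"
    using assms by (intro mult_ln_div_sqrt_mono) simp_all
  moreover have "z * ln 2 * ((1 + x') / sqrt ((1 + x')\<^sup>2 - 1))
      \<le> z * ln 2 * ((1 + x) / sqrt ((1 + x)\<^sup>2 - 1))"
    using assms by (intro mult_left_mono divide_sqrt_square_minus_one_antimono) simp_all
  ultimately show ?thesis
    using assms by (simp add: ffun_altdef mult_left_mono)
qed

lemma Qfun_ffun_antimono:
  fixes x x' y z :: real
  assumes "0 < x" and "x \<le> x'" and "0 \<le> y" and "0 \<le> z"
  shows "Qfun (ffun x' y z) \<le> Qfun (ffun x y z)"
  using assms by (intro Qfun_antimono ffun_mono)

lemma mult_divide_mult_add_mono:
  fixes g g' a b s :: real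
  assumes "0 \<le> g" and "g \<le> g'" and "0 \<le> a" and "0 \<le> b" and "0 < s"
  shows "g * a / (g * b + s) \<le> g' * a / (g' * b + s)"
proof -
  have "g * a * s \<le> g' * a * s"
    using assms by (intro mult_right_mono) simp_all
  then have "g * a * (g' * b + s) \<le> g' * a * (g * b + s)"
    by (simp add: algebra_simps)
  moreover have "0 < g * b + s" "0 < g' * b + s"
    using assms by (simp_all add: add_nonneg_pos)
  ultimately show ?thesis
    by (simp add: divide_simps)
qed

lemma mixture_mono:
  fixes a a' c c' w w' :: real
  assumes "a' \<le> a" and "c' \<le> c" and "w' \<le> w" and "0 \<le> w'" and "w' \<le> 1" and "a \<le> c"
  shows "a' * (1 - w') + c' * w' \<le> a * (1 - w) + c * w"
proof -
  have "a' * (1 - w') + c' * w' \<le> a * (1 - w') + c * w'"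
    using assms by (intro add_mono mult_right_mono) simp_all
  also have "\<dots> = a * (1 - w) + c * w - (w - w') * (c - a)"
    by (simp add: algebra_simps)
  also have "\<dots> \<le> a * (1 - w) + c * w"
    using assms by simp
  finally show ?thesis .
qed

lemma gamma21_mono:
  "0 \<le> g \<Longrightarrow> g \<le> g' \<Longrightarrow> 0 \<le> P1 \<Longrightarrow> 0 \<le> P2 \<Longrightarrow> 0 < s \<Longrightarrow>
    gamma21 g P1 P2 s \<le> gamma21 g' P1 P2 s"
  unfolding gamma21_def by (rule mult_divide_mult_add_mono)

lemma gamma11'_mono:
  "0 \<le> g \<Longrightarrow> g \<le> g' \<Longrightarrow> 0 \<le> P1 \<Longrightarrow> 0 \<le> P2 \<Longrightarrow> 0 < s \<Longrightarrow>
    gamma11' g P1 P2 s \<le> gamma11' g' P1 P2 s"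
  unfolding gamma11'_def by (rule mult_divide_mult_add_mono)

lemma gamma22_mono:
  "0 \<le> g \<Longrightarrow> g \<le> g' \<Longrightarrow> 0 \<le> P1 \<Longrightarrow> 0 \<le> P2 \<Longrightarrow> 0 < s \<Longrightarrow>
    gamma22 g P1 P2 s \<le> gamma22 g' P1 P2 s"
  unfolding gamma22_def by (rule mult_divide_mult_add_mono)

lemma gamma11_mono:
  "g \<le> g' \<Longrightarrow> 0 \<le> P1 \<Longrightarrow> 0 < s \<Longrightarrow> gamma11 g P1 s \<le> gamma11 g' P1 s"
  unfolding gamma11_def by (intro divide_right_mono mult_right_mono) simp_all

lemma gamma11'_le_gamma11:
  "0 \<le> g \<Longrightarrow> 0 \<le> P1 \<Longrightarrow> 0 \<le> P2 \<Longrightarrow> 0 < s \<Longrightarrow> gamma11' g P1 P2 s \<le> gamma11 g P1 s"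
  unfolding gamma11'_def gamma11_def by (intro frac_le) simp_all

lemma eps2_antimono:
  assumes "0 \<le> R2" and "0 < P1" and "0 < P2" and "0 < s2" and "0 < g" and "g \<le> g'"
  shows "eps2 N R2 P1 P2 s2 g' \<le> eps2 N R2 P1 P2 s2 g"
  using assms unfolding eps2_def
  by (intro Qfun_ffun_antimono gamma22_mono) (simp_all add: gamma22_def add_pos_pos)

lemma eps1_antimono:
  assumes "0 \<le> R1" and "0 \<le> R2" and "0 < P1" and "0 < P2" and "0 < s1"
    and "0 < g" and "g \<le> g'"
  shows "eps1 N R1 R2 P1 P2 s1 g' \<le> eps1 N R1 R2 P1 P2 s1 g"
proof -
  define e21 e11 e11' where
    "e21 x = Qfun (ffun (gamma21 x P1 P2 s1) (real N) R2)" and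
    "e11 x = Qfun (ffun (gamma11 x P1 s1) (real N) R1)" and
    "e11' x = Qfun (ffun (gamma11' x P1 P2 s1) (real N) R1)" for x
  define c where "c x = (if R1 \<le> log 2 (1 + gamma11' x P1 P2 s1) then e11' x else 1)" for x
  have eps1_eq: "eps1 N R1 R2 P1 P2 s1 x = e11 x * (1 - e21 x) + c x * e21 x" for x
    unfolding eps1_def e21_def e11_def e11'_def c_def Let_def by simp
  have gamma_pos: "0 < gamma21 g P1 P2 s1" "0 < gamma11 g P1 s1" "0 < gamma11' g P1 P2 s1"
    using assms by (simp_all add: gamma21_def gamma11_def gamma11'_def add_pos_pos)
  have e21_le: "e21 g' \<le> e21 g" and e11_le: "e11 g' \<le> e11 g" and e11'_le: "e11' g' \<le> e11' g"
    using assms gamma_pos unfolding e21_def e11_def e11'_def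
    by (intro Qfun_ffun_antimono gamma21_mono gamma11_mono gamma11'_mono; simp)+
  have "e11 g \<le> e11' g"
    using assms gamma_pos unfolding e11_def e11'_def
    by (intro Qfun_ffun_antimono gamma11'_le_gamma11) simp_all
  then have e11_le_c: "e11 g \<le> c g"
    by (simp add: c_def e11_def Qfun_le_one)
  have "c g' \<le> c g"
  proof (cases "R1 \<le> log 2 (1 + gamma11' g P1 P2 s1)")
    case True
    moreover have "log 2 (1 + gamma11' g P1 P2 s1) \<le> log 2 (1 + gamma11' g' P1 P2 s1)"
      using assms gamma_pos by (intro log_mono add_left_mono gamma11'_mono) simp_all
    ultimately show ?thesis
      using e11'_le by (simp add: c_def)
  next
    case False
    then show ?thesis
      by (simp add: c_def e11'_def Qfun_le_one)
  qed
  then show ?thesis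
    unfolding eps1_eq using e11_le e21_le e11_le_c
    by (intro mixture_mono) (simp_all add: e21_def Qfun_nonneg Qfun_le_one)
qed

lemma T1_mono_on:
  assumes "0 \<le> R1" and "0 \<le> R2" and "0 < P1" and "0 < P2" and "0 < s1"
  shows "mono_on {0<..} (T1 N R1 R2 P1 P2 s1)"
  using assms eps1_antimono[of R1 R2 P1 P2 s1]
  by (intro mono_onI) (auto simp: T1_def intro!: mult_left_mono)

lemma T2_mono_on:
  assumes "0 \<le> R2" and "0 < P1" and "0 < P2" and "0 < s2"
  shows "mono_on {0<..} (T2 N R2 P1 P2 s2)"
  using assms eps2_antimono[of R2 P1 P2 s2]
  by (intro mono_onI) (auto simp: T2_def intro!: mult_left_mono)

theorem proposition1:
  fixes N :: nat and R1 R2 P1 P2 s1 s2 :: real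
  assumes "N > 0" and "R1 \<ge> 0" and "R2 \<ge> 0" and "P1 > 0" and "P2 > 0"
    and "s1 > 0" and "s2 > 0"
  shows "mono_on {g1. 0 < g1 \<and> R1 \<le> log 2 (1 + gamma11 g1 P1 s1)}
           (\<lambda>g1. T1 N R1 R2 P1 P2 s1 g1)
       \<and> mono_on {0<..} (\<lambda>g2. T2 N R2 P1 P2 s2 g2)"
  using T1_mono_on[of R1 R2 P1 P2 s1 N] T2_mono_on[of R2 P1 P2 s2 N] assms
  by (auto elim: mono_on_subset)

end
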